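(* Let $r,s$ be positive integers and let $G$ be a complete $r$-partite graph on $n$ vertices that does not contain $M_{s+1}$ as a subgraph. If $n>2s+1$, then some part of $G$ has order at least $n-s$.
   Context: $M_{s+1}$ denotes the graph consisting of $s+1$ pairwise disjoint edges. *)

theory Defs
  imports Main
begin

text \<open>A simple graph is given by a finite vertex set V and a set E of edges,
each edge being a 2-element subset of V.\<close>

definition partition_into :: "'a set \<Rightarrow> 'a set set \<Rightarrow> bool" where
  "partition_into V P \<longleftrightarrow> (\<forall>A\<in>P. A \<noteq> {}) \<and> \<Union>P = V \<and>
     (\<forall>A\<in>P. \<forall>B\<in>P. A \<noteq> B \<longrightarrow> A \<inter> B = {})"

definition complete_multipartite :: "'a set \<Rightarrow> 'a set set \<Rightarrow> nat \<Rightarrow> 'a set set \<Rightarrow> bool" where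
  "complete_multipartite V E r P \<longleftrightarrow> partition_into V P \<and> card P = r \<and>
     E = {{x, y} | x y. \<exists>A\<in>P. \<exists>B\<in>P. A \<noteq> B \<and> x \<in> A \<and> y \<in> B}"

definition contains_matching :: "'a set set \<Rightarrow> nat \<Rightarrow> bool" where
  "contains_matching E k \<longleftrightarrow> (\<exists>M \<subseteq> E. finite M \<and> card M = k \<and>
     (\<forall>e\<in>M. \<forall>f\<in>M. e \<noteq> f \<longrightarrow> e \<inter> f = {}))"

end

theory Submission
  imports Defs
begin

text \<open>If every part has at most \<open>n - k\<close> of the \<open>n\<close> vertices and \<open>2 k \<le> n\<close>, the complete
  multipartite graph contains \<open>k\<close> disjoint edges: list the vertices part by part and match the
  \<open>i\<close>-th vertex with the \<open>(i + n - k)\<close>-th one for \<open>i < k\<close>. The \<open>n - k + 1\<close> vertices from the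
  \<open>i\<close>-th to the \<open>(i + n - k)\<close>-th cannot all lie in one part, so each pair is an edge, and
  \<open>2 k \<le> n\<close> makes the pairs disjoint. The theorem is the case \<open>k = s + 1\<close>.\<close>

lemma sorted_distinct_far_apart_nth_differ:
  assumes sorted: "sorted (map f xs)" and "distinct xs" and "i + d < length xs"
    and class_bound: "card {v \<in> set xs. f v = f (xs ! i)} \<le> d"
  shows "f (xs ! i) \<noteq> f (xs ! (i + d))"
proof
  assume same: "f (xs ! i) = f (xs ! (i + d))"
  define C where "C = {v \<in> set xs. f v = f (xs ! i)}"
  have "xs ! j \<in> C" if "j \<in> {i..i + d}" for j
  proof -
    have "f (xs ! i) \<le> f (xs ! j)" "f (xs ! j) \<le> f (xs ! (i + d))"
      using sorted_nth_mono[OF sorted] that \<open>i + d < length xs\<close> by auto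
    then have "f (xs ! j) = f (xs ! i)" using same by (metis order.antisym)
    moreover have "xs ! j \<in> set xs" using that \<open>i + d < length xs\<close> by simp
    ultimately show ?thesis by (simp add: C_def)
  qed
  then have "(!) xs ` {i..i + d} \<subseteq> C" by blast
  moreover have "card ((!) xs ` {i..i + d}) = d + 1"
    using \<open>distinct xs\<close> \<open>i + d < length xs\<close>
    by (subst card_image) (auto simp: inj_on_def nth_eq_iff_index_eq)
  moreover have "finite C" by (simp add: C_def)
  ultimately have "d + 1 \<le> card C" by (metis card_mono)
  then show False using class_bound by (simp add: C_def)
qed

lemma disjoint_bichromatic_pairs:
  fixes c :: "'a \<Rightarrow> 'b"
  assumes "finite V" and "2 * k \<le> card V"
    and class_bound: "\<And>x. card {v \<in> V. c v = x} \<le> card V - k"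
  obtains M where "finite M" and "card M = k"
    and "\<And>e. e \<in> M \<Longrightarrow> \<exists>u\<in>V. \<exists>v\<in>V. c u \<noteq> c v \<and> e = {u, v}"
    and "\<And>e f. e \<in> M \<Longrightarrow> f \<in> M \<Longrightarrow> e \<noteq> f \<Longrightarrow> e \<inter> f = {}"
proof -
  define n d where "n = card V" and "d = card V - k"
  obtain h :: "'b \<Rightarrow> nat" where h: "inj_on h (c ` V)"
    using finite_imp_inj_to_nat_seg[of "c ` V"] \<open>finite V\<close> by blast
  obtain xs where "distinct xs" "set xs = V"
    using finite_distinct_list[OF \<open>finite V\<close>] by blast
  define ys where "ys = sort_key (h \<circ> c) xs"
  have ys: "distinct ys" "set ys = V" "length ys = n" "sorted (map (h \<circ> c) ys)"
    using \<open>distinct xs\<close> \<open>set xs = V\<close> distinct_card[OF \<open>distinct xs\<close>]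
    by (simp_all add: ys_def n_def)
  have nth_inj: "inj_on ((!) ys) {..<n}"
    using ys by (auto simp: inj_on_def nth_eq_iff_index_eq)
  define pair where "pair i = {i, i + d}" for i
  define M where "M = (\<lambda>i. (!) ys ` pair i) ` {..<k}"
  have pair_below: "pair i \<subseteq> {..<n}" if "i < k" for i
    using that \<open>2 * k \<le> card V\<close> by (auto simp: pair_def n_def d_def)
  have pairs_disjoint: "pair i \<inter> pair j = {}" if "i < k" "j < k" "i \<noteq> j" for i j
    using that \<open>2 * k \<le> card V\<close> by (auto simp: pair_def d_def)
  have bichromatic: "c (ys ! i) \<noteq> c (ys ! (i + d))" if "i < k" for i
  proof -
    have "ys ! i \<in> V" using that \<open>2 * k \<le> card V\<close> ys by (auto simp: n_def)
    then have "{v \<in> set ys. (h \<circ> c) v = (h \<circ> c) (ys ! i)} = {v \<in> V. c v = c (ys ! i)}"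
      using h ys(2) by (auto dest: inj_onD)
    then have "(h \<circ> c) (ys ! i) \<noteq> (h \<circ> c) (ys ! (i + d))"
      using that \<open>2 * k \<le> card V\<close> class_bound ys
      by (intro sorted_distinct_far_apart_nth_differ[OF ys(4,1)]) (auto simp: n_def d_def)
    then show ?thesis by auto
  qed
  have images_disjoint: "(!) ys ` pair i \<inter> (!) ys ` pair j = {}"
    if "i < k" "j < k" "i \<noteq> j" for i j
    using inj_on_image_Int[OF nth_inj pair_below[OF that(1)] pair_below[OF that(2)]]
      pairs_disjoint[OF that] by simp
  have M_inj: "inj_on (\<lambda>i. (!) ys ` pair i) {..<k}"
  proof (rule inj_onI)
    fix i j assume "i \<in> {..<k}" "j \<in> {..<k}" "(!) ys ` pair i = (!) ys ` pair j"
    then have "pair i = pair j" using inj_on_image_eq_iff[OF nth_inj] pair_below by blast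
    then show "i = j" by (auto simp: pair_def doubleton_eq_iff)
  qed
  have "finite M" by (simp add: M_def)
  moreover have "card M = k" using M_inj by (simp add: M_def card_image)
  moreover have "\<exists>u\<in>V. \<exists>v\<in>V. c u \<noteq> c v \<and> e = {u, v}" if "e \<in> M" for e
  proof -
    obtain i where "i < k" and e: "e = (!) ys ` pair i" using \<open>e \<in> M\<close> by (auto simp: M_def)
    then have "ys ! i \<in> V" "ys ! (i + d) \<in> V"
      using pair_below ys(2,3) by (auto simp: pair_def)
    then show ?thesis
      using bichromatic[OF \<open>i < k\<close>] unfolding e pair_def image_insert image_empty by blast
  qed
  moreover have "e \<inter> f = {}" if "e \<in> M" "f \<in> M" "e \<noteq> f" for e f
  proof -
    obtain i j where "i < k" "j < k" and e: "e = (!) ys ` pair i" and f: "f = (!) ys ` pair j"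
      using \<open>e \<in> M\<close> \<open>f \<in> M\<close> by (auto simp: M_def)
    moreover have "i \<noteq> j" using \<open>e \<noteq> f\<close> e f by auto
    ultimately show ?thesis using images_disjoint by simp
  qed
  ultimately show ?thesis by (rule that)
qed

lemma partition_into_unique_part:
  assumes "partition_into V P" and "v \<in> V"
  shows "\<exists>!A. A \<in> P \<and> v \<in> A"
  using assms unfolding partition_into_def by blast

lemma complete_multipartite_edgeI:
  assumes "complete_multipartite V E r P" and "A \<in> P" and "B \<in> P" and "A \<noteq> B"
    and "x \<in> A" and "y \<in> B"
  shows "{x, y} \<in> E"
  using assms unfolding complete_multipartite_def by blast

lemma contains_matchingI:
  assumes "M \<subseteq> E" and "finite M" and "card M = k"
    and "\<And>e f. e \<in> M \<Longrightarrow> f \<in> M \<Longrightarrow> e \<noteq> f \<Longrightarrow> e \<inter> f = {}"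
  shows "contains_matching E k"
  using assms unfolding contains_matching_def by (intro exI[of _ M]) simp

lemma complete_multipartite_contains_matching:
  assumes "finite V" and multipartite: "complete_multipartite V E r P" and "2 * k \<le> card V"
    and part_bound: "\<forall>A\<in>P. card A \<le> card V - k"
  shows "contains_matching E k"
proof -
  have partition: "partition_into V P"
    using multipartite by (simp add: complete_multipartite_def)
  define part where "part v = (THE A. A \<in> P \<and> v \<in> A)" for v
  have part: "part v \<in> P" "v \<in> part v" if "v \<in> V" for v
    using theI'[OF partition_into_unique_part[OF partition that]] by (auto simp: part_def)
  have class_bound: "card {v \<in> V. part v = A} \<le> card V - k" for A
  proof (cases "A \<in> P")
    case True
    have "{v \<in> V. part v = A} \<subseteq> A" using part by auto
    moreover have "finite A"
      using True partition \<open>finite V\<close> by (metis Sup_upper partition_into_def rev_finite_subset)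
    ultimately show ?thesis using True part_bound by (meson card_mono le_trans)
  next
    case False
    then have "{v \<in> V. part v = A} = {}" using part by auto
    then show ?thesis by (metis card.empty zero_le)
  qed
  obtain M where "finite M" "card M = k"
    and bichromatic: "\<And>e. e \<in> M \<Longrightarrow> \<exists>u\<in>V. \<exists>v\<in>V. part u \<noteq> part v \<and> e = {u, v}"
    and disjoint: "\<And>e f. e \<in> M \<Longrightarrow> f \<in> M \<Longrightarrow> e \<noteq> f \<Longrightarrow> e \<inter> f = {}"
    by (rule disjoint_bichromatic_pairs[OF \<open>finite V\<close> \<open>2 * k \<le> card V\<close> class_bound]) (rule that)
  have "M \<subseteq> E"
  proof
    fix e assume "e \<in> M"
    then obtain u v where "u \<in> V" "v \<in> V" "part u \<noteq> part v" and e: "e = {u, v}"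
      using bichromatic by blast
    then show "e \<in> E"
      unfolding e using complete_multipartite_edgeI[OF multipartite, of "part u" "part v"] part
      by simp
  qed
  then show ?thesis using contains_matchingI \<open>finite M\<close> \<open>card M = k\<close> disjoint by blast
qed

theorem proposition12:
  fixes V :: "'a set" and E :: "'a set set" and P :: "'a set set" and r s n :: nat
  assumes "finite V" and "card V = n"
    and "r > 0" and "s > 0"
    and "complete_multipartite V E r P"
    and "\<not> contains_matching E (s + 1)"
    and "n > 2 * s + 1"
  shows "\<exists>A\<in>P. card A \<ge> n - s"
proof (rule ccontr)
  assume "\<not> (\<exists>A\<in>P. card A \<ge> n - s)"
  then have "\<forall>A\<in>P. card A \<le> card V - (s + 1)"
    using assms(2) by (auto simp: not_le)
  then have "contains_matching E (s + 1)"
    using complete_multipartite_contains_matching[OF assms(1,5)] assms(2,7) by simp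
  then show False using assms(6) by contradiction
qed

end
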